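(* Let $m\ge 1$ be an integer, $N=2m$, and let $x\in[-\pi/2,\pi/2]$. For $j=1,\ldots,2m$ define $\varphi_j=\left(\frac{N-(2j-1)}{N}\right)x$, so that $\varphi_j=-\varphi_{2m+1-j}$. For a function $g:\{1,\ldots,2m\}\to\{+1,-1\}$ satisfying the balanced condition $\sum_{j=1}^{2m} g(j)=0$, put $$\mathbf{S}(g)=\sum_{j=1}^{2m} g(j)\,e^{\imath\varphi_j}.$$ Then, over all such balanced $g$, the maximum of $|\mathbf{S}(g)|$ is attained at the two antisymmetric balanced functions $$g(j)=\begin{cases}1 & 1\le j\le m\\ -1 & m+1\le j\le 2m\end{cases}\qquad\text{and}\qquad g(j)=\begin{cases}-1 & 1\le j\le m\\ 1 & m+1\le j\le 2m.\end{cases}$$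
   Context: Here $\imath$ denotes the imaginary unit. Here $N$ is any even positive integer (not necessarily a power of 2). These two maximizing functions are called the antisymmetric balanced (ASB) functions; they correspond to the bit strings $0\cdots0\,1\cdots1$ and $1\cdots1\,0\cdots0$ (each block of length $m$). *)

theory Defs
  imports "HOL-Analysis.Analysis"
begin

definition phase :: "nat \<Rightarrow> real \<Rightarrow> nat \<Rightarrow> real" where
  "phase m x j = ((real (2*m) - (2 * real j - 1)) / real (2*m)) * x"

definition balanced :: "nat \<Rightarrow> (nat \<Rightarrow> int) \<Rightarrow> bool" where
  "balanced m g \<longleftrightarrow> (\<forall>j\<in>{1..2*m}. g j = 1 \<or> g j = -1) \<and> (\<Sum>j=1..2*m. g j) = 0"

definition S :: "nat \<Rightarrow> real \<Rightarrow> (nat \<Rightarrow> int) \<Rightarrow> complex" where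
  "S m x g = (\<Sum>j=1..2*m. of_int (g j) * exp (\<i> * complex_of_real (phase m x j)))"

definition asb1 :: "nat \<Rightarrow> nat \<Rightarrow> int" where
  "asb1 m j = (if j \<le> m then 1 else -1)"

definition asb2 :: "nat \<Rightarrow> nat \<Rightarrow> int" where
  "asb2 m j = (if j \<le> m then -1 else 1)"

end

theory Submission
  imports Defs
begin

text \<open>
  Pair \<open>j\<close> with \<open>2m+1-j\<close>, whose phases are opposite. With \<open>u j = g j + g (2m+1-j)\<close>
  and \<open>v j = g j - g (2m+1-j)\<close> for \<open>j \<le> m\<close> one gets
  \<open>Re S(g) = \<Sum> u j cos \<phi> j\<close>, \<open>Im S(g) = \<Sum> v j sin \<phi> j\<close> and \<open>|u j| + |v j| = 2\<close>.
  Balancedness says \<open>\<Sum> u j = 0\<close>, so \<open>cos \<phi> j\<close> may be replaced by \<open>cos \<phi> j - 1\<close>,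
  and \<open>1 - cos t \<le> |sin t|\<close> for \<open>|t| \<le> \<pi>/2\<close>. Hence
  \<open>|S(g)| \<le> |Re S(g)| + |Im S(g)| \<le> 2 \<Sum> |sin \<phi> j|\<close>. The antisymmetric functions have
  \<open>u = 0\<close> and \<open>v = \<plusminus>2\<close>, and all \<open>\<phi> j\<close> with \<open>j \<le> m\<close> have the sign of \<open>x\<close>,
  so they attain this bound.
\<close>

lemma sum_fold_reflect:
  fixes f :: "nat \<Rightarrow> 'a::comm_monoid_add"
  shows "(\<Sum>j=1..2*m. f j) = (\<Sum>j=1..m. f j + f (2*m+1-j))"
proof -
  have "{1..2*m} = {1..m} \<union> {m+1..2*m}" by auto
  then have "(\<Sum>j=1..2*m. f j) = (\<Sum>j=1..m. f j) + (\<Sum>j=m+1..2*m. f j)"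
    by (simp add: sum.union_disjoint)
  moreover have "(\<Sum>j=m+1..2*m. f j) = (\<Sum>j=1..m. f (2*m+1-j))"
    by (rule sum.reindex_bij_witness[of _ "\<lambda>j. 2*m+1-j" "\<lambda>j. 2*m+1-j"]) auto
  ultimately show ?thesis by (simp add: sum.distrib)
qed

lemma abs_sum_of_same_sign:
  fixes f :: "'a \<Rightarrow> 'b::ordered_ab_group_add_abs"
  assumes "(\<forall>i\<in>A. 0 \<le> f i) \<or> (\<forall>i\<in>A. f i \<le> 0)"
  shows "\<bar>sum f A\<bar> = (\<Sum>i\<in>A. \<bar>f i\<bar>)"
  using assms
proof
  assume "\<forall>i\<in>A. 0 \<le> f i"
  then show ?thesis by (simp add: sum_nonneg)
next
  assume nonpos: "\<forall>i\<in>A. f i \<le> 0"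
  then have "(\<Sum>i\<in>A. \<bar>f i\<bar>) = - sum f A" by (simp add: sum_negf[symmetric])
  with nonpos show ?thesis by (simp add: sum_nonpos)
qed

lemma one_minus_cos_le_abs_sin:
  assumes "\<bar>t\<bar> \<le> pi/2"
  shows "1 - cos t \<le> \<bar>sin t\<bar>"
proof -
  have "0 \<le> cos t" using assms by (intro cos_ge_zero) auto
  then have "1 - cos t \<le> (1 - cos t) * (1 + cos t)"
    using cos_le_one[of t] by (simp add: algebra_simps mult_left_le_one_le)
  also have "\<dots> = \<bar>sin t\<bar> * \<bar>sin t\<bar>"
    by (simp add: sin_squared_eq power2_eq_square algebra_simps flip: abs_mult)
  also have "\<dots> \<le> \<bar>sin t\<bar>" by (intro mult_left_le_one_le) simp_all
  finally show ?thesis .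
qed

lemma abs_sum_cos_le_of_sum_eq_0:
  fixes u t :: "'a \<Rightarrow> real"
  assumes "sum u A = 0" and "\<And>j. j \<in> A \<Longrightarrow> \<bar>t j\<bar> \<le> pi/2"
  shows "\<bar>\<Sum>j\<in>A. u j * cos (t j)\<bar> \<le> (\<Sum>j\<in>A. \<bar>u j\<bar> * \<bar>sin (t j)\<bar>)"
proof -
  have "(\<Sum>j\<in>A. u j * cos (t j)) = (\<Sum>j\<in>A. u j * (cos (t j) - 1))"
    using assms(1) by (simp add: algebra_simps sum_subtractf)
  also have "\<bar>\<dots>\<bar> \<le> (\<Sum>j\<in>A. \<bar>u j\<bar> * \<bar>cos (t j) - 1\<bar>)"
    using sum_abs[of "\<lambda>j. u j * (cos (t j) - 1)" A] by (simp only: abs_mult)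
  also have "\<dots> \<le> (\<Sum>j\<in>A. \<bar>u j\<bar> * \<bar>sin (t j)\<bar>)"
    using one_minus_cos_le_abs_sin[OF assms(2)]
    by (intro sum_mono mult_left_mono) (simp_all add: abs_minus_commute)
  finally show ?thesis .
qed

lemma phase_reflect:
  assumes "j \<le> 2*m+1"
  shows "phase m x (2*m+1-j) = - phase m x j"
proof -
  have "real (2*m+1-j) = 2*real m + 1 - real j" using assms by (simp add: of_nat_diff)
  then have "real (2*m) - (2 * real (2*m+1-j) - 1) = - (real (2*m) - (2 * real j - 1))"
    by simp
  then show ?thesis unfolding phase_def by (simp only: minus_divide_left)
qed

lemma phase_first_half:
  assumes "j \<in> {1..m}"
  obtains c where "0 \<le> c" "c \<le> 1" "phase m x j = c * x"
proof
  show "phase m x j = (real (2*m) - (2 * real j - 1)) / real (2*m) * x"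
    unfolding phase_def ..
  show "0 \<le> (real (2*m) - (2 * real j - 1)) / real (2*m)"
    and "(real (2*m) - (2 * real j - 1)) / real (2*m) \<le> 1"
    using assms by (auto simp: divide_simps)
qed

lemma abs_phase_le:
  assumes "j \<in> {1..m}" and "\<bar>x\<bar> \<le> pi/2"
  shows "\<bar>phase m x j\<bar> \<le> pi/2"
proof -
  obtain c where "0 \<le> c" "c \<le> 1" "phase m x j = c * x"
    using phase_first_half[OF assms(1)] .
  then have "\<bar>phase m x j\<bar> \<le> \<bar>x\<bar>" by (simp add: abs_mult mult_left_le_one_le)
  with assms(2) show ?thesis by simp
qed

lemma sin_phase_sign:
  assumes "j \<in> {1..m}" and "\<bar>x\<bar> \<le> pi/2"
  shows "0 \<le> x \<Longrightarrow> 0 \<le> sin (phase m x j)"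
    and "x \<le> 0 \<Longrightarrow> sin (phase m x j) \<le> 0"
proof -
  obtain c where c: "0 \<le> c" "phase m x j = c * x"
    using phase_first_half[OF assms(1)] by metis
  have bound: "\<bar>phase m x j\<bar> \<le> pi/2" using abs_phase_le[OF assms] .
  show "0 \<le> sin (phase m x j)" if "0 \<le> x"
  proof -
    have "0 \<le> phase m x j" using c that by simp
    with bound show ?thesis by (intro sin_ge_zero) auto
  qed
  show "sin (phase m x j) \<le> 0" if "x \<le> 0"
  proof -
    have "0 \<le> - phase m x j" using c that by (simp add: mult_nonneg_nonpos)
    with bound have "0 \<le> sin (- phase m x j)" by (intro sin_ge_zero) auto
    then show ?thesis by simp
  qed
qed

lemma sum_phase_fold_reflect:
  fixes a :: "nat \<Rightarrow> real"
  shows "(\<Sum>j=1..2*m. a j * h (phase m x j)) =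
         (\<Sum>j=1..m. a j * h (phase m x j) + a (2*m+1-j) * h (- phase m x j))"
  unfolding sum_fold_reflect
proof (rule sum.cong)
  fix j assume "j \<in> {1..m}"
  then have "phase m x (2*m+1-j) = - phase m x j" by (intro phase_reflect) auto
  then show "a j * h (phase m x j) + a (2*m+1-j) * h (phase m x (2*m+1-j)) =
             a j * h (phase m x j) + a (2*m+1-j) * h (- phase m x j)" by simp
qed simp

lemma Re_S:
  "Re (S m x g) = (\<Sum>j=1..m. of_int (g j + g (2*m+1-j)) * cos (phase m x j))"
proof -
  have "Re (S m x g) = (\<Sum>j=1..2*m. of_int (g j) * cos (phase m x j))"
    unfolding S_def by (simp add: Re_sum Re_exp)
  also have "\<dots> = (\<Sum>j=1..m. of_int (g j) * cos (phase m x j)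
                         + of_int (g (2*m+1-j)) * cos (- phase m x j))"
    by (rule sum_phase_fold_reflect)
  finally show ?thesis by (simp add: algebra_simps sum_subtractf)
qed

lemma Im_S:
  "Im (S m x g) = (\<Sum>j=1..m. of_int (g j - g (2*m+1-j)) * sin (phase m x j))"
proof -
  have "Im (S m x g) = (\<Sum>j=1..2*m. of_int (g j) * sin (phase m x j))"
    unfolding S_def by (simp add: Im_sum Im_exp)
  also have "\<dots> = (\<Sum>j=1..m. of_int (g j) * sin (phase m x j)
                         + of_int (g (2*m+1-j)) * sin (- phase m x j))"
    by (rule sum_phase_fold_reflect)
  finally show ?thesis by (simp add: algebra_simps sum_subtractf)
qed

lemma balanced_pair_sums:
  assumes "balanced m g"
  shows "(\<Sum>j=1..m. g j + g (2*m+1-j)) = 0"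
    and "j \<in> {1..m} \<Longrightarrow> \<bar>g j + g (2*m+1-j)\<bar> + \<bar>g j - g (2*m+1-j)\<bar> = 2"
proof -
  show "(\<Sum>j=1..m. g j + g (2*m+1-j)) = 0"
    using assms sum_fold_reflect[of g m] by (simp add: balanced_def)
  assume "j \<in> {1..m}"
  then have "j \<in> {1..2*m}" "2*m+1-j \<in> {1..2*m}" by auto
  then have "g j = 1 \<or> g j = -1" "g (2*m+1-j) = 1 \<or> g (2*m+1-j) = -1"
    using assms by (auto simp: balanced_def)
  then show "\<bar>g j + g (2*m+1-j)\<bar> + \<bar>g j - g (2*m+1-j)\<bar> = 2" by auto
qed

lemma cmod_S_le:
  assumes "balanced m g" and "\<bar>x\<bar> \<le> pi/2"
  shows "cmod (S m x g) \<le> 2 * (\<Sum>j=1..m. \<bar>sin (phase m x j)\<bar>)"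
proof -
  define u where "u j = real_of_int (g j + g (2*m+1-j))" for j
  define v where "v j = real_of_int (g j - g (2*m+1-j))" for j
  have "sum u {1..m} = 0"
    using balanced_pair_sums(1)[OF assms(1)] unfolding u_def by (metis of_int_0 of_int_sum)
  then have Re: "\<bar>Re (S m x g)\<bar> \<le> (\<Sum>j=1..m. \<bar>u j\<bar> * \<bar>sin (phase m x j)\<bar>)"
    unfolding Re_S u_def[symmetric] using abs_phase_le[OF _ assms(2)]
    by (intro abs_sum_cos_le_of_sum_eq_0) auto
  have Im: "\<bar>Im (S m x g)\<bar> \<le> (\<Sum>j=1..m. \<bar>v j\<bar> * \<bar>sin (phase m x j)\<bar>)"
    unfolding Im_S v_def[symmetric]
    using sum_abs[of "\<lambda>j. v j * sin (phase m x j)" "{1..m}"] by (simp only: abs_mult)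
  have "cmod (S m x g) \<le> \<bar>Re (S m x g)\<bar> + \<bar>Im (S m x g)\<bar>" by (rule cmod_le)
  also have "\<dots> \<le> (\<Sum>j=1..m. (\<bar>u j\<bar> + \<bar>v j\<bar>) * \<bar>sin (phase m x j)\<bar>)"
    using Re Im by (simp add: sum.distrib distrib_right)
  also have "\<dots> = (\<Sum>j=1..m. 2 * \<bar>sin (phase m x j)\<bar>)"
  proof (rule sum.cong)
    fix j assume "j \<in> {1..m}"
    then have "real_of_int (\<bar>g j + g (2*m+1-j)\<bar> + \<bar>g j - g (2*m+1-j)\<bar>) = 2"
      using balanced_pair_sums(2)[OF assms(1)] by simp
    then show "(\<bar>u j\<bar> + \<bar>v j\<bar>) * \<bar>sin (phase m x j)\<bar> = 2 * \<bar>sin (phase m x j)\<bar>"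
      unfolding u_def v_def by simp
  qed simp
  finally show ?thesis by (simp add: sum_distrib_left)
qed

lemma cmod_S_asb1:
  assumes "\<bar>x\<bar> \<le> pi/2"
  shows "cmod (S m x (asb1 m)) = 2 * (\<Sum>j=1..m. \<bar>sin (phase m x j)\<bar>)"
proof -
  have "Re (S m x (asb1 m)) = 0"
    unfolding Re_S by (rule sum.neutral) (auto simp: asb1_def)
  moreover have "Im (S m x (asb1 m)) = 2 * (\<Sum>j=1..m. sin (phase m x j))"
    unfolding Im_S sum_distrib_left by (rule sum.cong) (auto simp: asb1_def)
  moreover have "\<bar>\<Sum>j=1..m. sin (phase m x j)\<bar> = (\<Sum>j=1..m. \<bar>sin (phase m x j)\<bar>)"
    using sin_phase_sign[OF _ assms] by (intro abs_sum_of_same_sign) (meson linear)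
  ultimately show ?thesis by (simp add: cmod_eq_Im abs_mult)
qed

lemma asb2_eq_uminus_asb1: "asb2 m = (\<lambda>j. - asb1 m j)"
  by (auto simp: asb1_def asb2_def)

lemma S_uminus: "S m x (\<lambda>j. - g j) = - S m x g"
  unfolding S_def by (simp add: sum_negf)

lemma balanced_uminus: "balanced m (\<lambda>j. - g j) \<longleftrightarrow> balanced m g"
  unfolding balanced_def by (auto simp: sum_negf)

lemma balanced_asb1: "balanced m (asb1 m)"
proof -
  have "(\<Sum>j=1..m. asb1 m j + asb1 m (2*m+1-j)) = 0"
    by (rule sum.neutral) (auto simp: asb1_def)
  then show ?thesis
    using sum_fold_reflect[of "asb1 m" m] by (auto simp: balanced_def asb1_def)
qed

theorem theorem1:
  fixes m :: nat and x :: real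
  assumes "m \<ge> 1" and "-(pi/2) \<le> x" and "x \<le> pi/2"
  shows "balanced m (asb1 m) \<and> balanced m (asb2 m) \<and>
         (\<forall>g. balanced m g \<longrightarrow> cmod (S m x g) \<le> cmod (S m x (asb1 m))
                              \<and> cmod (S m x g) \<le> cmod (S m x (asb2 m)))"
proof -
  have x: "\<bar>x\<bar> \<le> pi/2" using assms(2,3) by auto
  have "cmod (S m x (asb2 m)) = cmod (S m x (asb1 m))"
    by (simp add: asb2_eq_uminus_asb1 S_uminus)
  moreover have "balanced m (asb2 m)"
    by (simp add: asb2_eq_uminus_asb1 balanced_uminus balanced_asb1)
  ultimately show ?thesis
    using balanced_asb1 cmod_S_le[OF _ x] cmod_S_asb1[OF x] by simp
qed

end
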